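(* Let $g(x)=\frac1\nu\int_{1-\nu}^1\Phi\big(\mu(x,u\,\mathcal{C}'/R)\big)\,du$ for $x\in[0,1]$. Then $g$ is differentiable (piecewise) with $$g'(x)=\frac{R}{\mathcal{C}'}\int_{z_x^{low}}^{z_x^{max}}\big(1+\delta_a+\delta_z\big)^2\phi(z)\,dz,$$ where $z_x^{low}=\mu(x,(1-\nu)\mathcal{C}'/R)$, $z_x^{max}=\mu(x,\mathcal{C}'/R)$, $\delta_a=a/\sqrt{2\log M}$ and $\delta_z=z/\sqrt{2\log M}$. Furthermore, if $$R=\frac{\mathcal{C}'}{(1+\delta_a)^2(1+r/\log M)}\quad\text{with } r\ge r_0:=\frac{1}{2(1+\delta_a)^2},$$ then $g(x)-x$ is a decreasing function of $x$ on $[0,1]$.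
   Context: Fix an integer $M\ge2$, $snr>0$, $\nu=snr/(1+snr)$, constants $a\ge0$, $\mathcal{C}'>0$, $R>0$. $\Phi,\phi$ denote the standard normal distribution function and density. For $x\in[0,1]$ and $u>0$, $\mu(x,u)=\big(\sqrt{u/(1-x\nu)}-1\big)\sqrt{2\log M}-a$ (natural logarithm). *)

theory Defs
  imports "HOL-Probability.Probability"
begin

abbreviation std_phi :: "real \<Rightarrow> real" where
  "std_phi \<equiv> std_normal_density"

definition std_Phi :: "real \<Rightarrow> real" where
  "std_Phi x = (LBINT t:{..x}. std_normal_density t)"

definition nu_of :: "real \<Rightarrow> real" where
  "nu_of snr = snr / (1 + snr)"

definition mu_fn :: "nat \<Rightarrow> real \<Rightarrow> real \<Rightarrow> real \<Rightarrow> real \<Rightarrow> real" where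
  "mu_fn M snr a x u = (sqrt (u / (1 - x * nu_of snr)) - 1) * sqrt (2 * ln (real M)) - a"

definition g_fn :: "nat \<Rightarrow> real \<Rightarrow> real \<Rightarrow> real \<Rightarrow> real \<Rightarrow> real \<Rightarrow> real" where
  "g_fn M snr a C' R x =
     (1 / nu_of snr) * integral {1 - nu_of snr..1} (\<lambda>u. std_Phi (mu_fn M snr a x (u * C' / R)))"

end

theory Submission
  imports Defs "HOL-Real_Asymp.Real_Asymp"
begin

(*
  Write L = sqrt (2 ln M), c = 1 + a/L and s = 1/L, so that c + s * mu(x,v) = sqrt (v/(1 - x nu)).
  The whole argument rests on an explicit primitive of the weight (c + s z)^2 phi(z), namely

      Phi_quad c s z = (c^2 + s^2) Phi(z) - (2 c s + s^2 z) phi(z),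

  which is nondecreasing and takes values in [0, c^2 + s^2] (its total mass E (c + s Z)^2).
  An integration-by-parts identity (primitive_deriv) then yields a closed-form primitive of
  u |-> Phi(mu(x, u C'/R)), so g(x) has a closed form whose x-derivative is
  (R/C') (Phi_quad(z_max) - Phi_quad(z_low)), i.e. the claimed integral (first claim).
  For the second claim the derivative of g(x) - x is bounded by (R/C') (c^2 + s^2) - 1, and
  the choice of R with r >= 1/(2 c^2) makes this bound nonpositive.
*)

lemma real_distribution_std_normal: "real_distribution (density lborel std_normal_density)"
proof -
  interpret prob_space "density lborel std_normal_density"
    by (rule prob_space_normal_density) auto
  show ?thesis by unfold_locales simp
qed

lemma std_Phi_eq_cdf: "std_Phi x = cdf (density lborel std_normal_density) x"
proof -
  have "cdf (density lborel std_normal_density) x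
      = integral\<^sup>L (density lborel std_normal_density) (indicator {..x})"
    by (simp add: cdf_def)
  also have "\<dots> = integral\<^sup>L lborel (\<lambda>t. std_normal_density t *\<^sub>R indicator {..x} t)"
    by (rule integral_density) (auto simp: normal_density_nonneg)
  also have "\<dots> = std_Phi x"
    unfolding std_Phi_def set_lebesgue_integral_def by (simp add: mult.commute)
  finally show ?thesis ..
qed

lemma std_Phi_at_top: "(std_Phi \<longlongrightarrow> 1) at_top"
  using real_distribution.cdf_lim_at_top_prob[OF real_distribution_std_normal]
  by (simp add: std_Phi_eq_cdf[abs_def])

lemma std_Phi_at_bot: "(std_Phi \<longlongrightarrow> 0) at_bot"
  using finite_borel_measure.cdf_lim_at_bot
          [OF real_distribution.finite_borel_measure_M[OF real_distribution_std_normal]]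
  by (simp add: std_Phi_eq_cdf[abs_def])

text \<open>Splitting off the mass below 0 turns Phi into an interval integral with a finite lower end,
  to which the fundamental theorem of calculus applies.\<close>

lemma std_Phi_split: "std_Phi x = std_Phi 0 + (LBINT t=0..x. std_normal_density t)"
proof -
  have integrable: "set_integrable lborel A std_normal_density" if "A \<in> sets lborel" for A
    using that integrable_std_normal_moment[of 0] unfolding set_integrable_def
    by (intro integrable_mult_indicator) simp_all
  have as_interval: "std_Phi z = (LBINT t=-\<infinity>..ereal z. std_normal_density t)" for z
    unfolding std_Phi_def interval_lebesgue_integral_def einterval_def
    by (auto intro!: set_integral_discrete_difference[where X="{z}"])
  have "(LBINT t=-\<infinity>..ereal 0. std_normal_density t) + (LBINT t=ereal 0..ereal x. std_normal_density t)
      = (LBINT t=-\<infinity>..ereal x. std_normal_density t)"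
    by (rule interval_integral_sum) (auto simp: interval_lebesgue_integrable_def integrable)
  then show ?thesis using as_interval[of 0] as_interval[of x] by (simp add: zero_ereal_def)
qed

lemma std_Phi_deriv: "(std_Phi has_real_derivative std_phi x) (at x)"
proof -
  define l where "l = - \<bar>x\<bar> - 1"
  define h where "h = \<bar>x\<bar> + 1"
  have "((\<lambda>y. LBINT t=ereal 0..y. std_normal_density t) has_vector_derivative std_phi x)
          (at x within {l..h})"
    by (rule interval_integral_FTC2[of l 0 h])
       (auto simp: l_def h_def std_normal_density_def intro!: continuous_intros)
  then have "((\<lambda>y. LBINT t=0..y. std_normal_density t) has_real_derivative std_phi x) (at x)"
    using at_within_Icc_at[of l x h]
    by (simp add: l_def h_def has_real_derivative_iff_has_vector_derivative zero_ereal_def)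
  then have "((\<lambda>y. std_Phi 0 + (LBINT t=0..y. std_normal_density t))
               has_real_derivative std_phi x) (at x)"
    by (auto intro!: derivative_eq_intros)
  then show ?thesis by (subst (asm) std_Phi_split[symmetric]) simp
qed

lemma std_phi_deriv: "(std_phi has_real_derivative (- z * std_phi z)) (at z)"
proof -
  have "sqrt (2 * pi) * sqrt (2 * pi) = 2 * pi" by simp
  then have "((\<lambda>z. (1 / sqrt (2 * pi)) * exp (- z\<^sup>2 / 2)) has_real_derivative
               - z * ((1 / sqrt (2 * pi)) * exp (- z\<^sup>2 / 2))) (at z)"
    by (auto intro!: derivative_eq_intros simp: power2_eq_square field_simps)
  then show ?thesis unfolding std_normal_density_def[abs_def] by (simp add: mult_ac)
qed

lemma std_Phi_deriv_eq [derivative_intros]: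
  "D = std_phi z \<Longrightarrow> (std_Phi has_real_derivative D) (at z within S)"
  using std_Phi_deriv has_field_derivative_at_within by blast

lemma std_phi_deriv_eq [derivative_intros]:
  "D = - z * std_phi z \<Longrightarrow> (std_phi has_real_derivative D) (at z within S)"
  using std_phi_deriv has_field_derivative_at_within by blast

definition Phi_quad :: "real \<Rightarrow> real \<Rightarrow> real \<Rightarrow> real" where
  "Phi_quad c s z = (c\<^sup>2 + s\<^sup>2) * std_Phi z - (2 * c * s + s\<^sup>2 * z) * std_phi z"

lemma Phi_quad_deriv: "(Phi_quad c s has_real_derivative (c + s * z)\<^sup>2 * std_phi z) (at z)"
  unfolding Phi_quad_def[abs_def]
  by (auto intro!: derivative_eq_intros simp: power2_eq_square algebra_simps)

lemma Phi_quad_integral: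
  assumes "l \<le> h"
  shows "integral {l..h} (\<lambda>z. (c + s * z)\<^sup>2 * std_phi z) = Phi_quad c s h - Phi_quad c s l"
proof (rule integral_unique, rule fundamental_theorem_of_calculus[OF assms])
  fix z assume "z \<in> {l..h}"
  show "(Phi_quad c s has_vector_derivative (c + s * z)\<^sup>2 * std_phi z) (at z within {l..h})"
    using Phi_quad_deriv
    by (simp add: has_real_derivative_iff_has_vector_derivative[symmetric]
                  has_field_derivative_at_within)
qed

lemma Phi_quad_mono:
  assumes "y \<le> z"
  shows "Phi_quad c s y \<le> Phi_quad c s z"
  using assms
  by (rule DERIV_nonneg_imp_nondecreasing)
     (auto intro!: exI Phi_quad_deriv simp: normal_density_nonneg)

lemma std_phi_tails:
  "(std_phi \<longlongrightarrow> 0) at_top" "((\<lambda>z. z * std_phi z) \<longlongrightarrow> 0) at_top"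
  "(std_phi \<longlongrightarrow> 0) at_bot" "((\<lambda>z. z * std_phi z) \<longlongrightarrow> 0) at_bot"
  unfolding std_normal_density_def by real_asymp+

lemma Phi_quad_expand:
  "Phi_quad c s = (\<lambda>z. (c\<^sup>2 + s\<^sup>2) * std_Phi z - (2 * c * s * std_phi z + s\<^sup>2 * (z * std_phi z)))"
  by (simp add: Phi_quad_def fun_eq_iff algebra_simps)

lemma Phi_quad_limits:
  "(Phi_quad c s \<longlongrightarrow> c\<^sup>2 + s\<^sup>2) at_top" "(Phi_quad c s \<longlongrightarrow> 0) at_bot"
proof -
  have "(Phi_quad c s \<longlongrightarrow> (c\<^sup>2 + s\<^sup>2) * 1 - (2 * c * s * 0 + s\<^sup>2 * 0)) at_top"
    unfolding Phi_quad_expand by (intro tendsto_intros std_Phi_at_top std_phi_tails)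
  then show "(Phi_quad c s \<longlongrightarrow> c\<^sup>2 + s\<^sup>2) at_top" by simp
  have "(Phi_quad c s \<longlongrightarrow> (c\<^sup>2 + s\<^sup>2) * 0 - (2 * c * s * 0 + s\<^sup>2 * 0)) at_bot"
    unfolding Phi_quad_expand by (intro tendsto_intros std_Phi_at_bot std_phi_tails)
  then show "(Phi_quad c s \<longlongrightarrow> 0) at_bot" by simp
qed

lemma Phi_quad_bounds: "0 \<le> Phi_quad c s z" "Phi_quad c s z \<le> c\<^sup>2 + s\<^sup>2"
proof -
  show "0 \<le> Phi_quad c s z"
    by (rule tendsto_upperbound[OF Phi_quad_limits(2)])
       (auto simp: eventually_at_bot_linorder intro!: exI[of _ z] Phi_quad_mono)
  show "Phi_quad c s z \<le> c\<^sup>2 + s\<^sup>2"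
    by (rule tendsto_lowerbound[OF Phi_quad_limits(1)])
       (auto simp: eventually_at_top_linorder intro!: exI[of _ z] Phi_quad_mono)
qed

text \<open>Integration by parts in closed form: if (c + s m)^2 t = p along a curve, then the
  contributions of the inner derivative m' cancel in p Phi(m) - t Phi_quad(m).
  This gives both the primitive of g's integrand and g's derivative.\<close>

lemma primitive_deriv:
  assumes m: "(m has_real_derivative m') (at y)"
    and t: "(t has_real_derivative t') (at y)"
    and p: "(p has_real_derivative p') (at y)"
    and link: "(c + s * m y)\<^sup>2 * t y = p y"
  shows "((\<lambda>y. p y * std_Phi (m y) - t y * Phi_quad c s (m y)) has_real_derivative
           p' * std_Phi (m y) - t' * Phi_quad c s (m y)) (at y)"
proof -
  have "((\<lambda>y. p y * std_Phi (m y) - t y * Phi_quad c s (m y)) has_real_derivative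
           (p y * (std_phi (m y) * m') + p' * std_Phi (m y))
           - (t y * ((c + s * m y)\<^sup>2 * std_phi (m y) * m') + t' * Phi_quad c s (m y))) (at y)"
    by (intro DERIV_diff DERIV_mult' p t DERIV_chain2[OF std_Phi_deriv m]
              DERIV_chain2[OF Phi_quad_deriv m])
  then show ?thesis
    by (simp add: link[symmetric] algebra_simps)
qed

lemma mass_le_rate_bound:
  fixes c s r l :: real
  assumes "l > 0" "s\<^sup>2 = 1 / (2 * l)" "c \<noteq> 0" "r \<ge> 1 / (2 * c\<^sup>2)"
  shows "c\<^sup>2 + s\<^sup>2 \<le> c\<^sup>2 * (1 + r / l)"
proof -
  have "c\<^sup>2 * r \<ge> 1 / 2"
    using assms(3,4) by (simp add: field_simps)
  then show ?thesis
    using assms(1,2) by (simp add: field_simps)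
qed

lemma antimono_on_minus_id:
  fixes f f' :: "real \<Rightarrow> real"
  assumes deriv: "\<And>x. x \<in> {l..h} \<Longrightarrow> (f has_real_derivative f' x) (at x)"
    and le_one: "\<And>x. x \<in> {l..h} \<Longrightarrow> f' x \<le> 1"
  shows "antimono_on {l..h} (\<lambda>x. f x - x)"
proof (rule monotone_onI)
  fix x y assume xy: "x \<in> {l..h}" "y \<in> {l..h}" "x \<le> y"
  show "f y - y \<le> f x - x"
  proof (rule DERIV_nonpos_imp_nonincreasing[OF xy(3)])
    fix z assume "x \<le> z" "z \<le> y"
    then have z: "z \<in> {l..h}" using xy by auto
    show "\<exists>D. ((\<lambda>x. f x - x) has_real_derivative D) (at z) \<and> D \<le> 0"
      using DERIV_diff[OF deriv[OF z] DERIV_ident] le_one[OF z] by auto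
  qed
qed

context
  fixes M :: nat and snr a C' R :: real
  assumes M2: "M \<ge> 2" and snr: "snr > 0" and C': "C' > 0" and R: "R > 0"
begin

abbreviation Lm :: real where "Lm \<equiv> sqrt (2 * ln (real M))"

lemma Lm_pos: "Lm > 0"
  using M2 by simp

lemma nu_bounds: "0 < nu_of snr" "nu_of snr < 1"
  using snr by (auto simp: nu_of_def)

lemma mu_weight:
  assumes "x * nu_of snr < 1" "v \<ge> 0"
  shows "(1 + a / Lm + 1 / Lm * mu_fn M snr a x v)\<^sup>2 = v / (1 - x * nu_of snr)"
proof -
  have "1 + a / Lm + 1 / Lm * mu_fn M snr a x v = sqrt (v / (1 - x * nu_of snr))"
    using Lm_pos by (simp add: mu_fn_def field_simps)
  then show ?thesis using assms by simp
qed

lemma mu_deriv_u: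
  assumes "x * nu_of snr < 1" "u > 0"
  shows "\<exists>D. ((\<lambda>u. mu_fn M snr a x (u * C' / R)) has_real_derivative D) (at u)"
proof -
  have "u * C' / R / (1 - x * nu_of snr) > 0"
    using assms C' R by simp
  then have "((\<lambda>u. mu_fn M snr a x (u * C' / R)) has_real_derivative
     inverse (sqrt (u * C' / R / (1 - x * nu_of snr))) / 2
       * (C' / R / (1 - x * nu_of snr)) * Lm) (at u)"
    unfolding mu_fn_def by (auto intro!: derivative_eq_intros DERIV_real_sqrt)
  then show ?thesis ..
qed

lemma mu_deriv_x:
  assumes "x * nu_of snr < 1" "v > 0"
  shows "\<exists>D. ((\<lambda>x. mu_fn M snr a x v) has_real_derivative D) (at x)"
proof -
  have "((\<lambda>x. mu_fn M snr a x v) has_real_derivative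
     Lm * (v * nu_of snr / (1 - x * nu_of snr)\<^sup>2) / (2 * sqrt (v / (1 - x * nu_of snr)))) (at x)"
    using assms unfolding mu_fn_def
    by (auto intro!: derivative_eq_intros simp: field_simps power2_eq_square)
  then show ?thesis ..
qed

definition g_primitive :: "real \<Rightarrow> real \<Rightarrow> real" where
  "g_primitive x u = u * std_Phi (mu_fn M snr a x (u * C' / R))
     - (1 - x * nu_of snr) * R / C' * Phi_quad (1 + a / Lm) (1 / Lm) (mu_fn M snr a x (u * C' / R))"

lemma g_primitive_link:
  assumes "x * nu_of snr < 1" "u > 0"
  shows "(1 + a / Lm + 1 / Lm * mu_fn M snr a x (u * C' / R))\<^sup>2 * ((1 - x * nu_of snr) * R / C') = u"
proof -
  have weight: "(1 + a / Lm + 1 / Lm * mu_fn M snr a x (u * C' / R))\<^sup>2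
                  = u * C' / R / (1 - x * nu_of snr)"
    using assms C' R by (intro mu_weight) auto
  show ?thesis
    unfolding weight using assms C' R by (simp add: field_simps)
qed

lemma g_primitive_deriv_u:
  assumes x: "x * nu_of snr < 1" and u: "u > 0"
  shows "(g_primitive x has_real_derivative std_Phi (mu_fn M snr a x (u * C' / R))) (at u)"
proof -
  obtain D where "((\<lambda>u. mu_fn M snr a x (u * C' / R)) has_real_derivative D) (at u)"
    using mu_deriv_u[OF x u] by blast
  from primitive_deriv[OF this DERIV_const DERIV_ident g_primitive_link[OF x u]]
  show ?thesis unfolding g_primitive_def[abs_def] by simp
qed

lemma g_primitive_deriv_x:
  assumes x: "x * nu_of snr < 1" and u: "u > 0"
  shows "((\<lambda>x. g_primitive x u) has_real_derivative
           nu_of snr * R / C' * Phi_quad (1 + a / Lm) (1 / Lm) (mu_fn M snr a x (u * C' / R))) (at x)"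
proof -
  have "u * C' / R > 0"
    using u C' R by simp
  then obtain D where mu: "((\<lambda>x. mu_fn M snr a x (u * C' / R)) has_real_derivative D) (at x)"
    using mu_deriv_x[OF x] by blast
  have factor: "((\<lambda>x. (1 - x * nu_of snr) * R / C') has_real_derivative - nu_of snr * R / C') (at x)"
    using C' by (auto intro!: derivative_eq_intros)
  show ?thesis
    using primitive_deriv[where p="\<lambda>_. u", OF mu factor DERIV_const g_primitive_link[OF x u]]
    unfolding g_primitive_def[abs_def] by simp
qed

lemma g_closed_form:
  assumes x: "x * nu_of snr < 1"
  shows "g_fn M snr a C' R x = (g_primitive x 1 - g_primitive x (1 - nu_of snr)) / nu_of snr"
proof -
  have "((\<lambda>u. std_Phi (mu_fn M snr a x (u * C' / R))) has_integral
          g_primitive x 1 - g_primitive x (1 - nu_of snr)) {1 - nu_of snr..1}"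
  proof (rule fundamental_theorem_of_calculus)
    fix u assume "u \<in> {1 - nu_of snr..1}"
    then have "u > 0" using nu_bounds by auto
    then show "(g_primitive x has_vector_derivative std_Phi (mu_fn M snr a x (u * C' / R)))
                 (at u within {1 - nu_of snr..1})"
      using g_primitive_deriv_u[OF x]
      by (simp add: has_real_derivative_iff_has_vector_derivative[symmetric]
                    has_field_derivative_at_within)
  qed (use nu_bounds in simp)
  then show ?thesis unfolding g_fn_def by (simp add: integral_unique)
qed

lemma g_deriv:
  assumes x: "x * nu_of snr < 1"
  shows "(g_fn M snr a C' R has_real_derivative
           R / C' * (Phi_quad (1 + a / Lm) (1 / Lm) (mu_fn M snr a x (C' / R))
                   - Phi_quad (1 + a / Lm) (1 / Lm) (mu_fn M snr a x ((1 - nu_of snr) * C' / R)))) (at x)"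
proof -
  have rescale: "(nu_of snr * R / C' * Q1 - nu_of snr * R / C' * Q2) / nu_of snr = R / C' * (Q1 - Q2)"
    for Q1 Q2 :: real
    using nu_bounds C' by (simp add: field_simps)
  have "((\<lambda>x. (g_primitive x 1 - g_primitive x (1 - nu_of snr)) / nu_of snr) has_real_derivative
          (nu_of snr * R / C' * Phi_quad (1 + a / Lm) (1 / Lm) (mu_fn M snr a x (1 * C' / R))
           - nu_of snr * R / C' * Phi_quad (1 + a / Lm) (1 / Lm)
               (mu_fn M snr a x ((1 - nu_of snr) * C' / R))) / nu_of snr) (at x)"
    using nu_bounds by (intro DERIV_cdivide DERIV_diff g_primitive_deriv_x[OF x]) auto
  then have closed: "((\<lambda>x. (g_primitive x 1 - g_primitive x (1 - nu_of snr)) / nu_of snr)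
     has_real_derivative R / C' * (Phi_quad (1 + a / Lm) (1 / Lm) (mu_fn M snr a x (C' / R))
       - Phi_quad (1 + a / Lm) (1 / Lm) (mu_fn M snr a x ((1 - nu_of snr) * C' / R)))) (at x)"
    by (simp only: rescale mult_1)
  have half_line: "y \<in> {..<1 / nu_of snr} \<longleftrightarrow> y * nu_of snr < 1" for y
    using nu_bounds by (simp add: field_simps)
  show ?thesis
    by (rule has_field_derivative_transform_within_open[OF closed, of "{..<1 / nu_of snr}"])
       (use half_line x g_closed_form in \<open>auto simp del: lessThan_iff\<close>)
qed

lemma mu_low_le_max:
  assumes x: "x * nu_of snr < 1"
  shows "mu_fn M snr a x ((1 - nu_of snr) * C' / R) \<le> mu_fn M snr a x (C' / R)"
proof -
  have "(1 - nu_of snr) * C' / R / (1 - x * nu_of snr) \<le> C' / R / (1 - x * nu_of snr)"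
    using nu_bounds x C' R by (intro divide_right_mono) (auto simp: field_simps)
  then show ?thesis
    unfolding mu_fn_def using Lm_pos by (intro diff_right_mono mult_right_mono) auto
qed

lemma rate_choice_bound:
  assumes a: "a \<ge> 0"
    and r: "r \<ge> 1 / (2 * (1 + a / Lm)\<^sup>2)"
    and rate: "R = C' / ((1 + a / Lm)\<^sup>2 * (1 + r / ln (real M)))"
  shows "R / C' * ((1 + a / Lm)\<^sup>2 + (1 / Lm)\<^sup>2) \<le> 1"
proof -
  have lnM: "ln (real M) > 0" using M2 by simp
  have c: "1 + a / Lm \<ge> 1" using Lm_pos a by simp
  have mass: "(1 + a / Lm)\<^sup>2 + (1 / Lm)\<^sup>2 \<le> (1 + a / Lm)\<^sup>2 * (1 + r / ln (real M))"
    using lnM c by (intro mass_le_rate_bound[OF lnM _ _ r]) (auto simp: power_divide)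
  have "0 < (1 + a / Lm)\<^sup>2 + (1 / Lm)\<^sup>2"
    using c by (intro add_pos_nonneg) auto
  then have "(1 + a / Lm)\<^sup>2 * (1 + r / ln (real M)) > 0"
    using mass by linarith
  moreover have "R / C' * X = 1" if "X > 0" "R = C' / X" for X
    using that C' by simp
  ultimately have "R / C' * ((1 + a / Lm)\<^sup>2 * (1 + r / ln (real M))) = 1"
    using rate by blast
  then show ?thesis
    using mass R C' by (metis divide_pos_pos less_eq_real_def mult_left_mono)
qed

end

theorem lemma6:
  fixes M :: nat and snr a C' R :: real
  assumes "M \<ge> 2" and "snr > 0" and "a \<ge> 0" and "C' > 0" and "R > 0"
  shows
    "(\<forall>x\<in>{0..1}.
        (g_fn M snr a C' R has_real_derivative
          (R / C') * integral {mu_fn M snr a x ((1 - nu_of snr) * C' / R) .. mu_fn M snr a x (C' / R)}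
             (\<lambda>z. (1 + a / sqrt (2 * ln (real M)) + z / sqrt (2 * ln (real M)))\<^sup>2 * std_phi z))
        (at x within {0..1}))
     \<and> (\<forall>r::real. r \<ge> 1 / (2 * (1 + a / sqrt (2 * ln (real M)))\<^sup>2) \<longrightarrow>
          R = C' / ((1 + a / sqrt (2 * ln (real M)))\<^sup>2 * (1 + r / ln (real M))) \<longrightarrow>
          antimono_on {0..1} (\<lambda>x. g_fn M snr a C' R x - x))"
proof -
  note params = assms(1,2,4,5)
  let ?c = "1 + a / Lm M" and ?s = "1 / Lm M"
  let ?Q = "\<lambda>x. Phi_quad ?c ?s (mu_fn M snr a x (C' / R))
                 - Phi_quad ?c ?s (mu_fn M snr a x ((1 - nu_of snr) * C' / R))"
  have inside: "x * nu_of snr < 1" if "x \<in> {0..1}" for x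
    using that nu_bounds[OF params] by (auto intro: le_less_trans[OF mult_left_le_one_le])
  have integral_eq: "integral {mu_fn M snr a x ((1 - nu_of snr) * C' / R) .. mu_fn M snr a x (C' / R)}
      (\<lambda>z. (1 + a / Lm M + z / Lm M)\<^sup>2 * std_phi z) = ?Q x" if "x \<in> {0..1}" for x
    using Phi_quad_integral[where c="?c" and s="?s", OF mu_low_le_max[where a=a, OF params inside[OF that]]]
    by simp
  have deriv: "(g_fn M snr a C' R has_real_derivative R / C' * ?Q x) (at x)" if "x \<in> {0..1}" for x
    using g_deriv[OF params inside[OF that]] .
  have mass_bound: "?Q x \<le> ?c\<^sup>2 + ?s\<^sup>2" for x
    using Phi_quad_bounds[of ?c ?s] by (smt (verit))
  have slope_le_one: "R / C' * ?Q x \<le> 1"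
    if "r \<ge> 1 / (2 * ?c\<^sup>2)" "R = C' / (?c\<^sup>2 * (1 + r / ln (real M)))" for x r
  proof -
    have "R / C' * ?Q x \<le> R / C' * (?c\<^sup>2 + ?s\<^sup>2)"
      using assms(4,5) mass_bound by (intro mult_left_mono) simp_all
    also have "\<dots> \<le> 1"
      using rate_choice_bound[OF params assms(3) that] .
    finally show ?thesis .
  qed
  have "antimono_on {0..1} (\<lambda>x. g_fn M snr a C' R x - x)"
    if "r \<ge> 1 / (2 * ?c\<^sup>2)" "R = C' / (?c\<^sup>2 * (1 + r / ln (real M)))" for r
    using deriv slope_le_one[OF that] by (rule antimono_on_minus_id)
  then show ?thesis
    using deriv integral_eq by (auto intro: has_field_derivative_at_within)
qed

end
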